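(* Let $\mathcal{S}\subseteq 2^{[n]}$ be a Sperner family and $h:\mathcal{S}\to 2^{[n]}$ a function with $h(S)\subseteq S$ for every $S\in\mathcal{S}$, and suppose $\mathcal{F}=\mathcal{F}(\mathcal{S},h)$ is s-extremal, $\mathcal{F}\subsetneq 2^{[n]}$, and $\mathrm{Sh}(\mathcal{F})=\mathcal{H}(\mathcal{S})$. Then there exists $F\in 2^{[n]}\setminus\mathcal{F}$ such that $\mathcal{F}\cup\{F\}$ is s-extremal if and only if there exists $S_0\in\mathcal{S}$ such that $\mathcal{Q}_{S_0,h(S_0)}\not\subseteq\bigcup_{S\in\mathcal{S}\setminus\{S_0\}}\mathcal{Q}_{S,h(S)}$.
   Context: $[n]=\{1,\dots,n\}$. A Sperner family is a family of sets none of which is contained in another. $\mathcal{F}$ shatters $S$ if $\{F\cap S:F\in\mathcal{F}\}=2^S$; $\mathrm{Sh}(\mathcal{F})$ is the family of shattered sets; $\mathcal{F}$ is s-extremal if $|\mathrm{Sh}(\mathcal{F})|=|\mathcal{F}|$. For $H\subseteq S\subseteq[n]$, $\mathcal{Q}_{S,H}=\{H\cup B: B\subseteq[n]\setminus S\}$. $\mathcal{H}(\mathcal{S})=\{F\subseteq[n]: \text{no } S\in\mathcal{S} \text{ satisfies } S\subseteq F\}$, and $\mathcal{F}(\mathcal{S},h)=2^{[n]}\setminus\bigcup_{S\in\mathcal{S}}\mathcal{Q}_{S,h(S)}$. *)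

theory Defs
  imports Main
begin

definition sperner :: "'a set set \<Rightarrow> bool" where
  "sperner SS \<longleftrightarrow> (\<forall>A\<in>SS. \<forall>B\<in>SS. A \<subseteq> B \<longrightarrow> A = B)"

definition shatters :: "nat set set \<Rightarrow> nat set \<Rightarrow> bool" where
  "shatters FF S \<longleftrightarrow> (\<lambda>F. F \<inter> S) ` FF = Pow S"

definition Sh :: "nat \<Rightarrow> nat set set \<Rightarrow> nat set set" where
  "Sh n FF = {S. S \<subseteq> {1..n} \<and> shatters FF S}"

definition s_extremal :: "nat \<Rightarrow> nat set set \<Rightarrow> bool" where
  "s_extremal n FF \<longleftrightarrow> card (Sh n FF) = card FF"

definition QQ :: "nat \<Rightarrow> nat set \<Rightarrow> nat set \<Rightarrow> nat set set" where
  "QQ n S H = {H \<union> B | B. B \<subseteq> {1..n} - S}"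

definition HH :: "nat \<Rightarrow> nat set set \<Rightarrow> nat set set" where
  "HH n SS = {F. F \<subseteq> {1..n} \<and> \<not> (\<exists>S\<in>SS. S \<subseteq> F)}"

definition FF_of :: "nat \<Rightarrow> nat set set \<Rightarrow> (nat set \<Rightarrow> nat set) \<Rightarrow> nat set set" where
  "FF_of n SS h = Pow {1..n} - (\<Union>S\<in>SS. QQ n S (h S))"

end

theory Submission
  imports Defs
begin

(* Write F for FF_of n SS h. A set G \<subseteq> [n] lies outside F exactly when it lies in some
   cube Q_{S,h(S)}, i.e. when G \<inter> S = h(S). For S \<in> SS the trace of F on S omits h(S), and it
   omits nothing else: traces cannot increase the defect |Sh| - |F| (Pajor's inequality
   applied one coordinate at a time), and by the Sperner property the trace shatters all
   proper subsets of S, so it has at least 2^|S| - 1 elements. Consequently adding a set G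
   outside F creates exactly the new shattered sets S with G \<inter> S = h(S), so F \<union> {G} is
   s-extremal iff G lies in exactly one cube, which is the condition on the right. *)


definition trace :: "nat set set \<Rightarrow> nat set \<Rightarrow> nat set set" where
  "trace G Y = (\<lambda>g. g \<inter> Y) ` G"

definition Sh_on :: "nat set \<Rightarrow> nat set set \<Rightarrow> nat set set" where
  "Sh_on X G = {T. T \<subseteq> X \<and> shatters G T}"

definition pairs_along :: "nat \<Rightarrow> nat set set \<Rightarrow> nat set set" where
  "pairs_along x G = {g\<in>G. x \<notin> g \<and> insert x g \<in> G}"

lemma trace_subset_Pow: "trace G T \<subseteq> Pow T"
  by (auto simp: trace_def)

lemma shatters_iff_Pow_subset: "shatters G T \<longleftrightarrow> Pow T \<subseteq> trace G T"
  using trace_subset_Pow[of G T] by (auto simp: shatters_def trace_def)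

lemma trace_trace: "trace (trace G Y) Z = trace G (Y \<inter> Z)"
  by (simp add: trace_def image_image Int_assoc)

lemma shatters_trace:
  assumes "T \<subseteq> Y"
  shows "shatters (trace G Y) T \<longleftrightarrow> shatters G T"
proof -
  have "Y \<inter> T = T" using assms by blast
  then show ?thesis by (simp add: shatters_iff_Pow_subset trace_trace)
qed

lemma shatters_mono: "shatters G T \<Longrightarrow> G \<subseteq> G' \<Longrightarrow> shatters G' T"
  unfolding shatters_iff_Pow_subset trace_def by blast

lemma finite_Sh_on: "finite X \<Longrightarrow> finite (Sh_on X G)"
  by (rule finite_subset[of _ "Pow X"]) (auto simp: Sh_on_def)

lemma Sh_on_trace: "Y \<subseteq> X \<Longrightarrow> Sh_on Y (trace G Y) = {T \<in> Sh_on X G. T \<subseteq> Y}"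
  by (auto simp: Sh_on_def shatters_trace)

lemma trace_delete: "G \<subseteq> Pow X \<Longrightarrow> trace G (X - {x}) = (\<lambda>g. g - {x}) ` G"
  unfolding trace_def by (intro image_cong) auto

lemma card_eq_card_delete_plus_card_pairs_along:
  assumes "finite G"
  shows "card G = card ((\<lambda>g. g - {x}) ` G) + card (pairs_along x G)"
proof -
  define Out where "Out = {g\<in>G. x \<notin> g}"
  define In where "In = {g\<in>G. x \<in> g}"
  define Dn where "Dn = (\<lambda>g. g - {x}) ` In"
  have fin: "finite Out" "finite In" "finite Dn" using assms by (simp_all add: Out_def In_def Dn_def)
  have "G = Out \<union> In" "Out \<inter> In = {}" by (auto simp: Out_def In_def)
  then have "card G = card Out + card In" using card_Un_disjoint[OF fin(1,2)] by simp
  also have "card In = card Dn"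
    unfolding Dn_def by (rule card_image[symmetric], rule inj_onI) (metis In_def insert_Diff mem_Collect_eq)
  also have "card Out + card Dn = card (Out \<union> Dn) + card (Out \<inter> Dn)"
    using card_Un_Int[OF fin(1,3)] .
  also have "Out \<union> Dn = (\<lambda>g. g - {x}) ` G"
  proof -
    have "(\<lambda>g. g - {x}) ` Out = (\<lambda>g. g) ` Out" by (rule image_cong) (auto simp: Out_def)
    then show ?thesis using \<open>G = Out \<union> In\<close> by (simp add: Dn_def image_Un)
  qed
  also have "Out \<inter> Dn = pairs_along x G"
  proof -
    have "g \<in> Dn \<longleftrightarrow> x \<notin> g \<and> insert x g \<in> G" for g
    proof
      assume "g \<in> Dn"
      then obtain a where "a \<in> G" "x \<in> a" "g = a - {x}" by (auto simp: Dn_def In_def)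
      then show "x \<notin> g \<and> insert x g \<in> G" by (simp add: insert_absorb)
    next
      assume "x \<notin> g \<and> insert x g \<in> G"
      then have "insert x g \<in> In" "g = insert x g - {x}" by (auto simp: In_def)
      then show "g \<in> Dn" unfolding Dn_def by blast
    qed
    then show ?thesis by (auto simp: Out_def pairs_along_def)
  qed
  finally show ?thesis .
qed

lemma shatters_insert_pairs_along:
  assumes "shatters (pairs_along x G) T" "x \<notin> T"
  shows "shatters G (insert x T)"
  unfolding shatters_iff_Pow_subset
proof
  fix P assume P: "P \<in> Pow (insert x T)"
  then have "P - {x} \<in> trace (pairs_along x G) T"
    using assms(1) by (auto simp: shatters_iff_Pow_subset)
  then obtain b where b: "b \<in> G" "x \<notin> b" "insert x b \<in> G" "P - {x} = b \<inter> T"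
    by (auto simp: trace_def pairs_along_def)
  show "P \<in> trace G (insert x T)"
  proof (cases "x \<in> P")
    case True
    then have "P = insert x b \<inter> insert x T" using b P by auto
    then show ?thesis using b(3) by (auto simp: trace_def)
  next
    case False
    then have "P = b \<inter> insert x T" using b P by auto
    then show ?thesis using b(1) by (auto simp: trace_def)
  qed
qed

lemma card_Sh_on_split:
  assumes "finite X" "G \<subseteq> Pow X" "x \<in> X"
  shows "card (Sh_on (X - {x}) ((\<lambda>g. g - {x}) ` G)) + card (Sh_on (X - {x}) (pairs_along x G))
    \<le> card (Sh_on X G)"
proof -
  let ?A = "Sh_on (X - {x}) ((\<lambda>g. g - {x}) ` G)" and ?B = "Sh_on (X - {x}) (pairs_along x G)"
  have "?A \<subseteq> Sh_on X G"
    using Sh_on_trace[of "X - {x}" X G] trace_delete[OF assms(2)] by auto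
  moreover have "insert x ` ?B \<subseteq> Sh_on X G"
    using assms(3) by (auto simp: Sh_on_def intro: shatters_insert_pairs_along)
  moreover have "?A \<inter> insert x ` ?B = {}" by (auto simp: Sh_on_def)
  moreover have "card (insert x ` ?B) = card ?B"
    by (rule card_image) (auto simp: Sh_on_def inj_on_def)
  ultimately show ?thesis
    using assms(1) finite_Sh_on[of X G] finite_Sh_on[of "X - {x}"]
    by (metis card_Un_disjoint card_mono finite_imageI finite_Diff le_sup_iff)
qed

theorem card_le_card_Sh_on:
  assumes "finite X" "G \<subseteq> Pow X"
  shows "card G \<le> card (Sh_on X G)"
  using assms
proof (induction X arbitrary: G rule: finite_induct)
  case empty
  then have "G \<subseteq> {{}}" by auto
  moreover have "Sh_on {} {{}} = {{}}" by (auto simp: Sh_on_def shatters_def)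
  ultimately show ?case by (cases "G = {}") (auto dest: subset_singletonD)
next
  case (insert x X)
  have X: "insert x X - {x} = X" using insert.hyps(2) by auto
  have fin: "finite G" using insert.prems insert.hyps(1) by (meson finite.insertI finite_Pow_iff rev_finite_subset)
  have "card G = card ((\<lambda>g. g - {x}) ` G) + card (pairs_along x G)"
    using card_eq_card_delete_plus_card_pairs_along[OF fin] .
  also have "\<dots> \<le> card (Sh_on X ((\<lambda>g. g - {x}) ` G)) + card (Sh_on X (pairs_along x G))"
    using insert.prems by (intro add_mono insert.IH) (auto simp: pairs_along_def)
  also have "\<dots> \<le> card (Sh_on (insert x X) G)"
    using card_Sh_on_split[OF _ insert.prems, of x] insert.hyps(1) X by simp
  finally show ?case .
qed

lemma card_Sh_on_delete:
  assumes "finite X" "G \<subseteq> Pow X" "x \<in> X"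
  shows "card (Sh_on (X - {x}) (trace G (X - {x}))) + card G
    \<le> card (Sh_on X G) + card (trace G (X - {x}))"
proof -
  have fin: "finite G" using assms(1,2) by (meson finite_Pow_iff rev_finite_subset)
  have "card (pairs_along x G) \<le> card (Sh_on (X - {x}) (pairs_along x G))"
    using assms(1,2) by (intro card_le_card_Sh_on) (auto simp: pairs_along_def)
  then show ?thesis
    using card_eq_card_delete_plus_card_pairs_along[OF fin, of x] card_Sh_on_split[OF assms]
    unfolding trace_delete[OF assms(2)] by linarith
qed

theorem card_Sh_on_trace:
  assumes "finite X" "Y \<subseteq> X" "G \<subseteq> Pow X"
  shows "card (Sh_on Y (trace G Y)) + card G \<le> card (Sh_on X G) + card (trace G Y)"
proof -
  have disjoint_union: "card (Sh_on Y (trace G Y)) + card G \<le> card (Sh_on (Y \<union> D) G) + card (trace G Y)"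
    if "finite D" "Y \<inter> D = {}" "G \<subseteq> Pow (Y \<union> D)" for D G
    using that
  proof (induction D arbitrary: G rule: finite_induct)
    case empty
    then have "trace G Y = (\<lambda>g. g) ` G" unfolding trace_def by (intro image_cong) auto
    then show ?case by simp
  next
    case (insert x D)
    let ?A = "trace G (Y \<union> D)"
    have delete_x: "Y \<union> insert x D - {x} = Y \<union> D" using insert.hyps(2) insert.prems(1) by auto
    have "finite Y" using assms(1,2) by (rule finite_subset[rotated])
    then have defect: "card (Sh_on (Y \<union> D) ?A) + card G \<le> card (Sh_on (Y \<union> insert x D) G) + card ?A"
      using card_Sh_on_delete[OF _ insert.prems(2), of x] insert.hyps(1) delete_x by simp
    have "Y \<inter> D = {}" using insert.prems(1) by blast
    moreover have "trace ?A Y = trace G Y" by (simp add: trace_trace Int_absorb2)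
    ultimately have "card (Sh_on Y (trace G Y)) + card ?A \<le> card (Sh_on (Y \<union> D) ?A) + card (trace G Y)"
      using insert.IH[OF _ trace_subset_Pow[of G]] by simp
    with defect show ?case by linarith
  qed
  have "X = Y \<union> (X - Y)" using assms(2) by blast
  then show ?thesis using disjoint_union[of "X - Y" G] assms by simp
qed

lemma shatters_insert_trace_avoiding:
  assumes "shatters (insert G F) T" "S \<subseteq> T" "H \<subseteq> S" "\<forall>g\<in>F. g \<inter> S \<noteq> H"
  shows "T = S \<and> G \<inter> S = H"
proof -
  have realised: "G \<inter> T = P" if "P \<in> Pow T" "P \<inter> S = H" for P
  proof -
    have "P \<in> trace (insert G F) T"
      using assms(1) that(1) unfolding shatters_iff_Pow_subset by blast
    then obtain g where "g \<in> insert G F" "g \<inter> T = P" unfolding trace_def by blast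
    moreover have "g \<inter> S = H" using \<open>g \<inter> T = P\<close> that(2) assms(2) by blast
    ultimately show ?thesis using assms(4) by auto
  qed
  have "G \<inter> T = H" using realised[of H] assms(2,3) by blast
  moreover have "T \<subseteq> S"
  proof
    fix y assume "y \<in> T"
    show "y \<in> S"
    proof (rule ccontr)
      assume "y \<notin> S"
      then have "G \<inter> T = insert y H" using realised[of "insert y H"] \<open>y \<in> T\<close> assms(2,3) by blast
      then show False using \<open>G \<inter> T = H\<close> \<open>y \<notin> S\<close> assms(3) by blast
    qed
  qed
  ultimately show ?thesis using assms(2) by blast
qed

lemma QQ_eq:
  assumes "S \<subseteq> {1..n}" "H \<subseteq> S"
  shows "QQ n S H = {G. G \<subseteq> {1..n} \<and> G \<inter> S = H}"
proof
  show "QQ n S H \<subseteq> {G. G \<subseteq> {1..n} \<and> G \<inter> S = H}"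
    unfolding QQ_def using assms by auto
  show "{G. G \<subseteq> {1..n} \<and> G \<inter> S = H} \<subseteq> QQ n S H"
  proof
    fix G assume "G \<in> {G. G \<subseteq> {1..n} \<and> G \<inter> S = H}"
    then have "G = H \<union> (G - S)" "G - S \<subseteq> {1..n} - S" by auto
    then show "G \<in> QQ n S H" unfolding QQ_def by blast
  qed
qed

definition cubes_containing :: "nat \<Rightarrow> nat set set \<Rightarrow> (nat set \<Rightarrow> nat set) \<Rightarrow> nat set \<Rightarrow> nat set set"
  where "cubes_containing n SS h G = {S \<in> SS. G \<in> QQ n S (h S)}"

lemma mem_FF_of_iff: "G \<in> FF_of n SS h \<longleftrightarrow> G \<subseteq> {1..n} \<and> cubes_containing n SS h G = {}"
  by (auto simp: FF_of_def cubes_containing_def)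

lemma ex_cubes_containing_singleton_iff:
  "(\<exists>G S0. cubes_containing n SS h G = {S0})
    \<longleftrightarrow> (\<exists>S0\<in>SS. \<not> QQ n S0 (h S0) \<subseteq> (\<Union>S\<in>SS - {S0}. QQ n S (h S)))"
  unfolding cubes_containing_def by blast

lemma Sh_eq_Sh_on: "Sh n G = Sh_on {1..n} G"
  by (simp add: Sh_def Sh_on_def)

locale sperner_extremal =
  fixes n :: nat and SS :: "nat set set" and h :: "nat set \<Rightarrow> nat set"
  assumes SS_subset: "SS \<subseteq> Pow {1..n}"
    and sperner: "sperner SS"
    and h_subset: "\<forall>S\<in>SS. h S \<subseteq> S"
    and extremal: "s_extremal n (FF_of n SS h)"
    and Sh_FF_of: "Sh n (FF_of n SS h) = HH n SS"
begin

abbreviation "F \<equiv> FF_of n SS h"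

lemma mem_QQ_iff:
  assumes "S \<in> SS"
  shows "G \<in> QQ n S (h S) \<longleftrightarrow> G \<subseteq> {1..n} \<and> G \<inter> S = h S"
proof -
  have "S \<subseteq> {1..n}" "h S \<subseteq> S" using assms SS_subset h_subset by auto
  then show ?thesis by (simp add: QQ_eq)
qed

lemma FF_of_subset: "F \<subseteq> Pow {1..n}"
  by (auto simp: FF_of_def)

lemma FF_of_avoids:
  assumes "g \<in> F" "S \<in> SS"
  shows "g \<inter> S \<noteq> h S"
proof -
  have "g \<subseteq> {1..n}" "g \<notin> QQ n S (h S)"
    using assms by (auto simp: mem_FF_of_iff cubes_containing_def)
  then show ?thesis by (simp add: mem_QQ_iff[OF assms(2)])
qed

lemma trace_FF_of:
  assumes S: "S \<in> SS"
  shows "trace F S = Pow S - {h S}"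
proof -
  have SX: "S \<subseteq> {1..n}" and hS: "h S \<subseteq> S" using S SS_subset h_subset by auto
  then have finS: "finite S" by (meson finite_atLeastAtMost finite_subset)
  have sub: "trace F S \<subseteq> Pow S - {h S}"
    using FF_of_avoids[OF _ S] by (auto simp: trace_def)
  have "Sh_on S (trace F S) = {T \<in> HH n SS. T \<subseteq> S}"
    using Sh_on_trace[OF SX] Sh_FF_of by (simp add: Sh_eq_Sh_on)
  also have "\<dots> = Pow S - {S}"
  proof (intro set_eqI iffI)
    fix T assume "T \<in> {T \<in> HH n SS. T \<subseteq> S}"
    then show "T \<in> Pow S - {S}" using S by (auto simp: HH_def)
  next
    fix T assume T: "T \<in> Pow S - {S}"
    have "\<not> S' \<subseteq> T" if S': "S' \<in> SS" for S'
    proof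
      assume "S' \<subseteq> T"
      then have "S' \<subseteq> S" using T by blast
      then have "S' = S" using sperner S' S by (simp add: sperner_def)
      then show False using \<open>S' \<subseteq> T\<close> T by blast
    qed
    then show "T \<in> {T \<in> HH n SS. T \<subseteq> S}" using T SX by (auto simp: HH_def)
  qed
  finally have "card (Pow S - {S}) + card F \<le> card (Sh_on {1..n} F) + card (trace F S)"
    using card_Sh_on_trace[OF _ SX FF_of_subset] by simp
  moreover have "card (Sh_on {1..n} F) = card F"
    using extremal by (simp add: s_extremal_def Sh_eq_Sh_on)
  moreover have "card (Pow S - {h S}) = card (Pow S - {S})"
    using finS hS by simp
  ultimately have "card (Pow S - {h S}) \<le> card (trace F S)" by simp
  then show ?thesis using card_seteq[OF _ sub] finS by simp
qed

lemma Sh_insert_FF_of: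
  assumes G: "G \<in> Pow {1..n} - F"
  shows "Sh n (insert G F) = HH n SS \<union> cubes_containing n SS h G"
proof (intro equalityI subsetI)
  fix T assume T: "T \<in> Sh n (insert G F)"
  show "T \<in> HH n SS \<union> cubes_containing n SS h G"
  proof (cases "T \<in> HH n SS")
    case False
    then obtain S where S: "S \<in> SS" "S \<subseteq> T" using T by (auto simp: HH_def Sh_def)
    have "shatters (insert G F) T" using T by (simp add: Sh_def)
    moreover have "h S \<subseteq> S" using S(1) h_subset by blast
    moreover have "\<forall>g\<in>F. g \<inter> S \<noteq> h S" using FF_of_avoids S(1) by blast
    ultimately have "T = S \<and> G \<inter> S = h S"
      using S(2) by (intro shatters_insert_trace_avoiding)
    then show ?thesis using S(1) G by (simp add: cubes_containing_def mem_QQ_iff)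
  qed simp
next
  fix T assume "T \<in> HH n SS \<union> cubes_containing n SS h G"
  then show "T \<in> Sh n (insert G F)"
  proof
    assume "T \<in> HH n SS"
    then have "T \<subseteq> {1..n}" "shatters F T" using Sh_FF_of by (auto simp: Sh_def)
    then show ?thesis using shatters_mono[of F T "insert G F"] by (simp add: Sh_def subset_insertI)
  next
    assume "T \<in> cubes_containing n SS h G"
    then have T: "T \<in> SS" "G \<inter> T = h T" by (auto simp: cubes_containing_def mem_QQ_iff)
    then have "trace (insert G F) T = insert (h T) (Pow T - {h T})"
      using trace_FF_of by (simp add: trace_def)
    also have "\<dots> = Pow T" using T(1) h_subset by auto
    finally have "shatters (insert G F) T" unfolding shatters_iff_Pow_subset by simp
    then show ?thesis using T(1) SS_subset by (auto simp: Sh_def)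
  qed
qed

lemma s_extremal_insert_FF_of_iff:
  assumes G: "G \<in> Pow {1..n} - F"
  shows "s_extremal n (F \<union> {G}) \<longleftrightarrow> card (cubes_containing n SS h G) = 1"
proof -
  have finHH: "finite (HH n SS)" by (rule finite_subset[of _ "Pow {1..n}"]) (auto simp: HH_def)
  have finC: "finite (cubes_containing n SS h G)"
    using SS_subset by (auto simp: cubes_containing_def intro: finite_subset)
  have "HH n SS \<inter> cubes_containing n SS h G = {}" by (auto simp: HH_def cubes_containing_def)
  then have "card (Sh n (insert G F)) = card F + card (cubes_containing n SS h G)"
    using Sh_insert_FF_of[OF G] card_Un_disjoint[OF finHH finC] extremal Sh_FF_of
    by (simp add: s_extremal_def)
  moreover have "card (insert G F) = card F + 1"
    using G FF_of_subset by (simp add: finite_subset)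
  ultimately show ?thesis by (simp add: s_extremal_def)
qed

end

theorem lemma17:
  fixes n :: nat and SS :: "nat set set" and h :: "nat set \<Rightarrow> nat set"
  assumes "SS \<subseteq> Pow {1..n}"
    and "sperner SS"
    and "\<forall>S\<in>SS. h S \<subseteq> S"
    and "s_extremal n (FF_of n SS h)"
    and "FF_of n SS h \<subset> Pow {1..n}"
    and "Sh n (FF_of n SS h) = HH n SS"
  shows "(\<exists>F \<in> Pow {1..n} - FF_of n SS h. s_extremal n (FF_of n SS h \<union> {F}))
    \<longleftrightarrow> (\<exists>S0\<in>SS. \<not> (QQ n S0 (h S0) \<subseteq> (\<Union>S\<in>SS - {S0}. QQ n S (h S))))"
proof -
  interpret sperner_extremal n SS h
    by unfold_locales (fact assms)+
  have "(\<exists>G \<in> Pow {1..n} - F. s_extremal n (F \<union> {G})) \<longleftrightarrow> (\<exists>G S0. cubes_containing n SS h G = {S0})"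
  proof
    assume "\<exists>G \<in> Pow {1..n} - F. s_extremal n (F \<union> {G})"
    then show "\<exists>G S0. cubes_containing n SS h G = {S0}"
      using s_extremal_insert_FF_of_iff card_1_singletonE by metis
  next
    assume "\<exists>G S0. cubes_containing n SS h G = {S0}"
    then obtain G S0 where G: "cubes_containing n SS h G = {S0}" by blast
    then have "S0 \<in> SS" "G \<in> QQ n S0 (h S0)" by (auto simp: cubes_containing_def)
    then have "G \<in> Pow {1..n} - F" using G by (simp add: mem_QQ_iff mem_FF_of_iff)
    moreover have "card (cubes_containing n SS h G) = 1" using G by simp
    ultimately show "\<exists>G \<in> Pow {1..n} - F. s_extremal n (F \<union> {G})"
      using s_extremal_insert_FF_of_iff by blast
  qed
  then show ?thesis using ex_cubes_containing_singleton_iff by simp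
qed

end
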